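(* Let $\Omega\subset\mathbb{R}^N$ ($N\ge2$) be a bounded smooth domain, $1<q<2$, $b\in C^\alpha(\overline\Omega)$ with $\Omega^b_+\neq\emptyset$ and $\int_\Omega b\le0$. For $\epsilon>0$ small (so that $\{b>\epsilon\}\neq\emptyset$), let $\lambda_\epsilon>0$ be the positive principal eigenvalue of $-\Delta\varphi=\lambda(b-\epsilon)\epsilon^{q-2}\varphi$ in $\Omega$, $\frac{\partial\varphi}{\partial\mathbf{n}}=0$ on $\partial\Omega$. Then $\lim_{\epsilon\to0^+}\lambda_\epsilon=0$.
   Context: $\Omega^b_+=\{x\in\Omega:b(x)>0\}$. A principal eigenvalue is one having a positive eigenfunction; for such $\epsilon$ the problem has exactly two principal eigenvalues, $0$ and $\lambda_\epsilon>0$. *)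

theory Defs
  imports "HOL-Analysis.Analysis"
begin

fun Ck_on :: "nat \<Rightarrow> 'a::real_normed_vector set \<Rightarrow> ('a \<Rightarrow> real) \<Rightarrow> bool" where
  "Ck_on 0 S f \<longleftrightarrow> continuous_on S f"
| "Ck_on (Suc k) S f \<longleftrightarrow> (\<forall>x\<in>S. f differentiable (at x)) \<and>
      (\<forall>v. Ck_on k S (\<lambda>x. frechet_derivative f (at x) v))"

definition smooth_on :: "'a::real_normed_vector set \<Rightarrow> ('a \<Rightarrow> real) \<Rightarrow> bool" where
  "smooth_on S f \<longleftrightarrow> (\<forall>k. Ck_on k S f)"

definition pderiv_i :: "'n::finite \<Rightarrow> (real^'n \<Rightarrow> real) \<Rightarrow> real^'n \<Rightarrow> real" where
  "pderiv_i i f x = frechet_derivative f (at x) (axis i 1)"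

definition grad :: "(real^'n::finite \<Rightarrow> real) \<Rightarrow> real^'n \<Rightarrow> real^'n" where
  "grad f x = (\<chi> i. pderiv_i i f x)"

definition laplacian :: "(real^'n::finite \<Rightarrow> real) \<Rightarrow> real^'n \<Rightarrow> real" where
  "laplacian f x = (\<Sum>i\<in>UNIV. pderiv_i i (pderiv_i i f) x)"

text \<open>Its gradient at x is then an
  outward normal vector.\<close>
definition local_defining_fn :: "(real^'n::finite) set \<Rightarrow> real^'n \<Rightarrow> real \<Rightarrow> (real^'n \<Rightarrow> real) \<Rightarrow> bool" where
  "local_defining_fn \<Omega> x r \<rho> \<longleftrightarrow> 0 < r \<and> smooth_on (ball x r) \<rho> \<and>
     (\<forall>y\<in>ball x r. grad \<rho> y \<noteq> 0) \<and>
     \<Omega> \<inter> ball x r = {y\<in>ball x r. \<rho> y < 0} \<and>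
     frontier \<Omega> \<inter> ball x r = {y\<in>ball x r. \<rho> y = 0}"

definition bounded_smooth_domain :: "(real^'n::finite) set \<Rightarrow> bool" where
  "bounded_smooth_domain \<Omega> \<longleftrightarrow> open \<Omega> \<and> connected \<Omega> \<and> bounded \<Omega> \<and> \<Omega> \<noteq> {} \<and>
     (\<forall>x\<in>frontier \<Omega>. \<exists>r \<rho>. local_defining_fn \<Omega> x r \<rho>)"

definition holder_on :: "real \<Rightarrow> ('a::metric_space) set \<Rightarrow> ('a \<Rightarrow> real) \<Rightarrow> bool" where
  "holder_on \<alpha> S b \<longleftrightarrow> (\<exists>C. \<forall>x\<in>S. \<forall>y\<in>S. \<bar>b x - b y\<bar> \<le> C * dist x y powr \<alpha>)"

definition principal_neumann_eigenvalue ::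
  "(real^'n::finite) set \<Rightarrow> (real^'n \<Rightarrow> real) \<Rightarrow> real \<Rightarrow> bool" where
  "principal_neumann_eigenvalue \<Omega> w lam \<longleftrightarrow>
     (\<exists>\<phi> D. Ck_on 2 \<Omega> \<phi> \<and>
        (\<forall>x\<in>closure \<Omega>. (\<phi> has_derivative D x) (at x within closure \<Omega>)) \<and>
        (\<forall>v. continuous_on (closure \<Omega>) (\<lambda>x. D x v)) \<and>
        (\<forall>x\<in>\<Omega>. \<phi> x > 0) \<and>
        (\<forall>x\<in>\<Omega>. - laplacian \<phi> x = lam * w x * \<phi> x) \<and>
        (\<forall>x\<in>frontier \<Omega>. \<forall>r \<rho>. local_defining_fn \<Omega> x r \<rho> \<longrightarrow> D x (grad \<rho> x) = 0))"

end

theory Submission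
  imports Defs
begin

text \<open>Let phi > 0 be an eigenfunction, - Delta phi = lam w phi with w = (b - eps) eps^(q-2).
  Choose a cube of half-width a on which b \<ge> beta > 0.  Sliding the first Dirichlet
  eigenfunction psi of the cube under phi until it touches at a point p and comparing
  second derivatives there gives - Delta phi p \<le> mu phi p with mu = N (pi / (2 a))^2.
  For eps \<le> beta / 2 we have w p \<ge> (beta / 2) eps^(q-2), hence
  lam \<le> (2 mu / beta) eps^(2-q), which tends to 0 because q < 2.\<close>

abbreviation open_cube :: "real^'n \<Rightarrow> real \<Rightarrow> (real^'n) set" where
  "open_cube x0 a \<equiv> box (x0 - (\<chi> j. a)) (x0 + (\<chi> j. a))"

abbreviation closed_cube :: "real^'n \<Rightarrow> real \<Rightarrow> (real^'n) set" where
  "closed_cube x0 a \<equiv> cbox (x0 - (\<chi> j. a)) (x0 + (\<chi> j. a))"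

lemma mem_cube_iff:
  fixes x0 x :: "real^'n"
  shows "x \<in> open_cube x0 a \<longleftrightarrow> (\<forall>j. \<bar>x$j - x0$j\<bar> < a)"
    and "x \<in> closed_cube x0 a \<longleftrightarrow> (\<forall>j. \<bar>x$j - x0$j\<bar> \<le> a)"
  by (auto simp: mem_box_cart abs_less_iff abs_le_iff algebra_simps)

lemma open_contains_closed_cube:
  fixes U :: "(real^'n) set"
  assumes "open U" "x \<in> U"
  obtains a where "a > 0" "closed_cube x a \<subseteq> U"
proof -
  obtain r where r: "r > 0" "ball x r \<subseteq> U"
    using assms open_contains_ball by blast
  define a where "a = r / (2 * real CARD('n))"
  have "y \<in> ball x r" if "y \<in> closed_cube x a" for y
  proof -
    have "dist x y \<le> (\<Sum>j\<in>UNIV. \<bar>(y - x)$j\<bar>)"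
      using norm_le_l1_cart[of "y - x"] by (simp add: dist_norm norm_minus_commute)
    also have "\<dots> \<le> (\<Sum>j\<in>(UNIV::'n set). a)"
      using that unfolding mem_cube_iff by (intro sum_mono) simp
    also have "\<dots> < r" using r by (simp add: a_def)
    finally show ?thesis by simp
  qed
  moreover have "a > 0" using r by (simp add: a_def)
  ultimately show ?thesis using that r by blast
qed

lemma has_real_derivative_along_line:
  fixes f :: "'a::real_normed_vector \<Rightarrow> real"
  assumes "f differentiable (at (p + s *\<^sub>R v))"
  shows "((\<lambda>s. f (p + s *\<^sub>R v)) has_real_derivative frechet_derivative f (at (p + s *\<^sub>R v)) v) (at s)"
proof -
  let ?D = "frechet_derivative f (at (p + s *\<^sub>R v))"
  have D: "(f has_derivative ?D) (at (p + s *\<^sub>R v))"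
    using assms frechet_derivative_works by blast
  have "((\<lambda>s. p + s *\<^sub>R v) has_derivative (\<lambda>h. h *\<^sub>R v)) (at s)"
    by (auto intro!: derivative_eq_intros)
  from diff_chain_at[OF this D]
  have "((\<lambda>s. f (p + s *\<^sub>R v)) has_derivative (\<lambda>h. ?D (h *\<^sub>R v))) (at s)"
    by (simp add: o_def)
  moreover have "(\<lambda>h. ?D (h *\<^sub>R v)) = (*) (?D v)"
    using linear_scale[OF has_derivative_linear[OF D]] by (auto simp: mult.commute)
  ultimately show ?thesis by (simp add: has_field_derivative_def)
qed

lemma second_derivative_nonneg_at_local_min:
  fixes f f' :: "real \<Rightarrow> real"
  assumes "d > 0"
    and f': "\<And>s. \<bar>s\<bar> < d \<Longrightarrow> (f has_real_derivative f' s) (at s)"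
    and f'': "(f' has_real_derivative c) (at 0)"
    and min: "\<And>s. \<bar>s\<bar> < d \<Longrightarrow> f 0 \<le> f s"
  shows "0 \<le> c"
proof (rule ccontr)
  assume "\<not> 0 \<le> c"
  then obtain e where e: "e > 0" "\<And>h. 0 < h \<Longrightarrow> h < e \<Longrightarrow> f' h < f' 0"
    using DERIV_neg_dec_right[OF f''] by force
  have "f' 0 = 0"
    using DERIV_local_min[OF f'[of 0] \<open>d > 0\<close>] \<open>d > 0\<close> min by auto
  define h where "h = min e d / 2"
  have h: "0 < h" "h < e" "h < d" using e \<open>d > 0\<close> by (auto simp: h_def)
  then obtain z where z: "0 < z" "z < h" "f h - f 0 = h * f' z"
    using MVT2[of 0 h f f'] f' by force
  have "f' z < 0" using e(2)[of z] z h \<open>f' 0 = 0\<close> by simp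
  then have "h * f' z < 0" using h by (simp add: mult_pos_neg)
  then have "f h < f 0" using z by simp
  with min[of h] h show False by simp
qed

lemma pderiv2_ge_touching_barrier:
  fixes \<phi> :: "real^'n \<Rightarrow> real"
  assumes \<phi>: "Ck_on 2 \<Omega> \<phi>" and "d > 0" and ball: "ball p d \<subseteq> \<Omega>"
    and h': "\<And>s. (h has_real_derivative h' s) (at s)"
    and h'': "(h' has_real_derivative h'') (at 0)"
    and below: "\<And>s. \<bar>s\<bar> < d \<Longrightarrow> h s \<le> \<phi> (p + s *\<^sub>R axis i 1)"
    and touch: "h 0 = \<phi> p"
  shows "h'' \<le> pderiv_i i (pderiv_i i \<phi>) p"
proof -
  define g where "g = (\<lambda>x. frechet_derivative \<phi> (at x) (axis i 1))"
  have pd: "pderiv_i i \<phi> = g" by (simp add: g_def pderiv_i_def[abs_def])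
  have line: "p + s *\<^sub>R axis i 1 \<in> \<Omega>" if "\<bar>s\<bar> < d" for s
    using ball that by (auto simp: dist_norm)
  have "p \<in> \<Omega>" using line[of 0] \<open>d > 0\<close> by simp
  have \<phi>_diff: "\<forall>x\<in>\<Omega>. \<phi> differentiable (at x)"
    and g_diff: "\<forall>x\<in>\<Omega>. g differentiable (at x)"
    using \<phi> by (auto simp: numeral_2_eq_2 g_def)
  let ?f = "\<lambda>s. \<phi> (p + s *\<^sub>R axis i 1) - h s"
  have f'': "((\<lambda>s. g (p + s *\<^sub>R axis i 1) - h' s)
          has_real_derivative pderiv_i i g p - h'') (at 0)"
    using DERIV_diff[OF has_real_derivative_along_line[of g p 0 "axis i 1"] h'']
      g_diff \<open>p \<in> \<Omega>\<close> by (simp add: pderiv_i_def)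
  have f': "(?f has_real_derivative g (p + s *\<^sub>R axis i 1) - h' s) (at s)"
    if "\<bar>s\<bar> < d" for s
    using DERIV_diff[OF has_real_derivative_along_line[of \<phi> p s "axis i 1"] h']
      \<phi>_diff line[OF that] by (simp add: g_def)
  have "0 \<le> pderiv_i i g p - h''"
    by (rule second_derivative_nonneg_at_local_min[OF \<open>d > 0\<close> f' f'']) (use below touch in auto)
  then show ?thesis by (simp add: pd)
qed

text \<open>With c = pi / (2 a), the first Dirichlet eigenfunction of the cube of half-width a;
  it satisfies - Delta psi = N c^2 psi.\<close>
definition cos_bump :: "real \<Rightarrow> real^'n \<Rightarrow> real^'n \<Rightarrow> real" where
  "cos_bump c x0 x = (\<Prod>j\<in>UNIV. cos (c * (x$j - x0$j)))"

lemma continuous_on_cos_bump: "continuous_on S (cos_bump c x0)"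
  unfolding cos_bump_def by (auto intro!: continuous_intros)

lemma cos_bump_pos:
  assumes "c * a = pi / 2" "c > 0" "x \<in> open_cube x0 a"
  shows "cos_bump c x0 x > 0"
  unfolding cos_bump_def
proof (intro prod_pos ballI)
  fix j
  have "\<bar>c * (x$j - x0$j)\<bar> < c * a"
    using assms by (simp add: abs_mult mem_cube_iff)
  then show "0 < cos (c * (x$j - x0$j))"
    using assms by (intro cos_gt_zero_pi) auto
qed

lemma cos_bump_eq_0:
  assumes "c * a = pi / 2" "x \<in> closed_cube x0 a" "x \<notin> open_cube x0 a"
  shows "cos_bump c x0 x = 0"
proof -
  from assms obtain j where "\<bar>x$j - x0$j\<bar> = a"
    unfolding mem_cube_iff by (meson order_le_less)
  then have "x$j - x0$j = a \<or> x$j - x0$j = - a" by linarith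
  then have "c * (x$j - x0$j) = pi / 2 \<or> c * (x$j - x0$j) = - (pi / 2)"
    using assms(1) by auto
  then have "cos (c * (x$j - x0$j)) = 0" by (metis cos_pi_half cos_minus)
  then show ?thesis unfolding cos_bump_def by (intro prod_zero) auto
qed

lemma cos_bump_along_axis:
  "cos_bump c x0 (p + s *\<^sub>R axis i 1)
     = (\<Prod>j\<in>UNIV-{i}. cos (c * (p$j - x0$j))) * cos (c * (p$i - x0$i) + c * s)"
proof -
  have "cos_bump c x0 (p + s *\<^sub>R axis i 1)
      = cos (c * ((p + s *\<^sub>R axis i 1)$i - x0$i))
        * (\<Prod>j\<in>UNIV-{i}. cos (c * ((p + s *\<^sub>R axis i 1)$j - x0$j)))"
    unfolding cos_bump_def by (rule prod.remove) auto
  also have "(\<Prod>j\<in>UNIV-{i}. cos (c * ((p + s *\<^sub>R axis i 1)$j - x0$j)))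
           = (\<Prod>j\<in>UNIV-{i}. cos (c * (p$j - x0$j)))"
    by (rule prod.cong) (auto simp: axis_def)
  finally show ?thesis by (simp add: axis_def algebra_simps)
qed

text \<open>The contact point minimises phi / psi over Q.  As psi vanishes on S - Q, it suffices
  to minimise over the compact set where psi is at least delta, for delta so small that
  off this set t psi stays below min phi.\<close>
lemma exists_touching_multiple:
  fixes \<phi> \<psi> :: "'a::metric_space \<Rightarrow> real"
  assumes "compact S" "Q \<subseteq> S" "x0 \<in> Q"
    and "continuous_on S \<phi>" "continuous_on S \<psi>"
    and "\<forall>x\<in>S. 0 < \<phi> x" and \<psi>_pos: "\<forall>x\<in>Q. 0 < \<psi> x" and \<psi>_0: "\<forall>x\<in>S-Q. \<psi> x = 0"
  obtains p t where "p \<in> Q" "\<forall>y\<in>Q. t * \<psi> y \<le> \<phi> y" "t * \<psi> p = \<phi> p"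
proof -
  obtain xm where xm: "xm \<in> S" "\<forall>y\<in>S. \<phi> xm \<le> \<phi> y"
    using continuous_attains_inf[of S \<phi>] assms by blast
  define r where "r = \<phi> x0 / \<psi> x0"
  have r: "r > 0" using assms by (auto simp: r_def)
  define \<delta> where "\<delta> = \<phi> xm / r"
  have \<delta>: "\<delta> > 0" "\<delta> \<le> \<psi> x0" "r * \<delta> = \<phi> xm"
    using assms xm r by (auto simp: \<delta>_def r_def field_simps)
  define K where "K = S \<inter> \<psi> -` {\<delta>..}"
  have "closed K" unfolding K_def
    by (rule continuous_closed_preimage[OF assms(5) compact_imp_closed[OF assms(1)]]) simp
  have "compact K"
    using compact_Int_closed[OF assms(1) \<open>closed K\<close>] by (simp add: K_def Int_left_absorb)
  have KQ: "K \<subseteq> Q" using \<psi>_0 \<delta> by (force simp: K_def)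
  have "x0 \<in> K" using assms \<delta> by (auto simp: K_def)
  have "K \<subseteq> S" by (simp add: K_def)
  have "continuous_on K (\<lambda>x. \<phi> x / \<psi> x)"
    using KQ \<psi>_pos by (intro continuous_on_divide continuous_on_subset[OF assms(4) \<open>K \<subseteq> S\<close>]
      continuous_on_subset[OF assms(5) \<open>K \<subseteq> S\<close>]) force+
  then obtain p where p: "p \<in> K" "\<forall>y\<in>K. \<phi> p / \<psi> p \<le> \<phi> y / \<psi> y"
    using continuous_attains_inf[OF \<open>compact K\<close>] \<open>x0 \<in> K\<close> by blast
  define t where "t = \<phi> p / \<psi> p"
  have "\<psi> p > 0" using p(1) KQ \<psi>_pos by blast
  then have touch: "t * \<psi> p = \<phi> p" by (simp add: t_def)
  have "t \<le> r" using p(2) \<open>x0 \<in> K\<close> by (simp add: t_def r_def)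
  have below: "t * \<psi> y \<le> \<phi> y" if "y \<in> Q" for y
  proof (cases "y \<in> K")
    case True
    then have "t \<le> \<phi> y / \<psi> y" using p(2) by (simp add: t_def)
    then show ?thesis using \<psi>_pos that by (simp add: pos_le_divide_eq)
  next
    case False
    then have "\<psi> y < \<delta>" using that assms by (auto simp: K_def)
    then have "t * \<psi> y \<le> r * \<delta>"
      using \<open>t \<le> r\<close> r \<psi>_pos that by (intro mult_mono) auto
    also have "\<dots> \<le> \<phi> y" using \<delta>(3) xm that assms by auto
    finally show ?thesis .
  qed
  show ?thesis using that[of p t] p(1) KQ below touch by blast
qed

lemma barta_inequality_cube:
  fixes \<phi> :: "real^'n \<Rightarrow> real"
  assumes \<phi>: "Ck_on 2 \<Omega> \<phi>" and \<phi>_pos: "\<forall>x\<in>\<Omega>. \<phi> x > 0"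
    and "a > 0" and cube: "closed_cube x0 a \<subseteq> \<Omega>"
  obtains p where "p \<in> open_cube x0 a"
    "- laplacian \<phi> p \<le> real CARD('n) * (pi / (2 * a))\<^sup>2 * \<phi> p"
proof -
  define c where "c = pi / (2 * a)"
  have c: "c > 0" "c * a = pi / 2" using \<open>a > 0\<close> by (auto simp: c_def)
  have "continuous_on \<Omega> \<phi>"
    using \<phi> by (auto simp: numeral_2_eq_2 intro!: differentiable_imp_continuous_on
      simp: differentiable_on_def differentiable_at_withinI)
  obtain p t where p: "p \<in> open_cube x0 a"
    and below: "\<forall>y\<in>open_cube x0 a. t * cos_bump c x0 y \<le> \<phi> y"
    and touch: "t * cos_bump c x0 p = \<phi> p"
  proof (rule exists_touching_multiple)
    show "compact (closed_cube x0 a)" by simp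
    show "open_cube x0 a \<subseteq> closed_cube x0 a" by (rule box_subset_cbox)
    show "x0 \<in> open_cube x0 a" using \<open>a > 0\<close> by (simp add: mem_cube_iff)
    show "continuous_on (closed_cube x0 a) \<phi>"
      using \<open>continuous_on \<Omega> \<phi>\<close> cube continuous_on_subset by blast
    show "\<forall>x\<in>closed_cube x0 a. 0 < \<phi> x" using \<phi>_pos cube by blast
  qed (use c in \<open>auto intro: cos_bump_pos cos_bump_eq_0 continuous_on_cos_bump\<close>)
  obtain d where d: "d > 0" "ball p d \<subseteq> open_cube x0 a"
    using p open_contains_ball by blast
  have "- (c\<^sup>2 * \<phi> p) \<le> pderiv_i i (pderiv_i i \<phi>) p" for i
  proof -
    define C where "C = (\<Prod>j\<in>UNIV-{i}. cos (c * (p$j - x0$j)))"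
    define \<theta> where "\<theta> = c * (p$i - x0$i)"
    have along: "cos_bump c x0 (p + s *\<^sub>R axis i 1) = C * cos (\<theta> + c * s)" for s
      unfolding C_def \<theta>_def by (rule cos_bump_along_axis)
    have "- (t * C * cos \<theta> * c * c) \<le> pderiv_i i (pderiv_i i \<phi>) p"
    proof (rule pderiv2_ge_touching_barrier[OF \<phi> d(1)])
      show "ball p d \<subseteq> \<Omega>" using d box_subset_cbox cube by blast
      show "t * (C * cos (\<theta> + c * s)) \<le> \<phi> (p + s *\<^sub>R axis i 1)" if "\<bar>s\<bar> < d" for s
      proof -
        have "p + s *\<^sub>R axis i 1 \<in> ball p d" using that by (simp add: dist_norm)
        then have "p + s *\<^sub>R axis i 1 \<in> open_cube x0 a" using d(2) by blast
        then show ?thesis using below along[of s] by auto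
      qed
      show "t * (C * cos (\<theta> + c * 0)) = \<phi> p" using touch along[of 0] by simp
    qed (auto intro!: derivative_eq_intros)
    moreover have "t * C * cos \<theta> * c * c = c\<^sup>2 * (t * C * cos \<theta>)"
      by (simp add: power2_eq_square mult_ac)
    moreover have "t * C * cos \<theta> = \<phi> p" using touch along[of 0] by (simp add: mult.assoc)
    ultimately show ?thesis by metis
  qed
  then have "(\<Sum>i\<in>(UNIV::'n set). - (c\<^sup>2 * \<phi> p)) \<le> laplacian \<phi> p"
    unfolding laplacian_def by (rule sum_mono)
  then show ?thesis using that p by (simp add: c_def)
qed

lemma principal_neumann_eigenvalue_le_cube:
  fixes \<Omega> :: "(real^'n) set"
  assumes "principal_neumann_eigenvalue \<Omega> w lam"
    and "a > 0" "closed_cube x0 a \<subseteq> \<Omega>"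
    and "\<kappa> > 0" "\<forall>x\<in>closed_cube x0 a. \<kappa> \<le> w x"
  shows "lam \<le> real CARD('n) * (pi / (2 * a))\<^sup>2 / \<kappa>"
proof -
  define \<mu> where "\<mu> = real CARD('n) * (pi / (2 * a))\<^sup>2"
  obtain \<phi> where \<phi>: "Ck_on 2 \<Omega> \<phi>" "\<forall>x\<in>\<Omega>. \<phi> x > 0"
    "\<forall>x\<in>\<Omega>. - laplacian \<phi> x = lam * w x * \<phi> x"
    using assms(1) unfolding principal_neumann_eigenvalue_def by blast
  obtain p where p: "p \<in> open_cube x0 a" "- laplacian \<phi> p \<le> \<mu> * \<phi> p"
    using barta_inequality_cube[OF \<phi>(1,2) assms(2,3)] unfolding \<mu>_def by blast
  have "p \<in> \<Omega>" "\<kappa> \<le> w p" using p(1) assms(3,5) box_subset_cbox by blast+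
  have "lam * w p \<le> \<mu>" using p(2) \<phi> \<open>p \<in> \<Omega>\<close> by simp
  have "lam * \<kappa> \<le> \<mu>"
  proof (cases "lam \<ge> 0")
    case True
    then have "lam * \<kappa> \<le> lam * w p" using \<open>\<kappa> \<le> w p\<close> by (simp add: mult_left_mono)
    with \<open>lam * w p \<le> \<mu>\<close> show ?thesis by linarith
  next
    case False
    then have "lam * \<kappa> < 0" using \<open>\<kappa> > 0\<close> by (simp add: mult_neg_pos)
    moreover have "0 \<le> \<mu>" unfolding \<mu>_def by simp
    ultimately show ?thesis by linarith
  qed
  then show ?thesis using \<open>\<kappa> > 0\<close> by (simp add: \<mu>_def pos_le_divide_eq)
qed

lemma exists_cube_bounded_below:
  fixes \<Omega> :: "(real^'n) set" and b :: "real^'n \<Rightarrow> real"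
  assumes "open \<Omega>" "continuous_on \<Omega> b" "x1 \<in> \<Omega>" "b x1 > 0"
  obtains x0 a \<beta> where "a > 0" "\<beta> > 0" "closed_cube x0 a \<subseteq> \<Omega>"
    "\<forall>x\<in>closed_cube x0 a. \<beta> \<le> b x"
proof -
  obtain A where A: "open A" "A \<inter> \<Omega> = {x\<in>\<Omega>. b x1 / 2 < b x}"
    using open_Collect_less_Int[OF continuous_on_const assms(2)] by blast
  have "open (A \<inter> \<Omega>)" using A(1) assms(1) by (rule open_Int)
  moreover have "x1 \<in> A \<inter> \<Omega>" using A(2) assms by auto
  ultimately obtain a where "a > 0" "closed_cube x1 a \<subseteq> A \<inter> \<Omega>"
    by (rule open_contains_closed_cube)
  with A assms(4) show ?thesis by (intro that[of a "b x1 / 2" x1]) auto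
qed

lemma principal_neumann_eigenvalue_le_scaled_weight:
  fixes \<Omega> :: "(real^'n) set"
  assumes "principal_neumann_eigenvalue \<Omega> (\<lambda>x. (b x - \<epsilon>) * \<epsilon> powr (q - 2)) lam"
    and "a > 0" "closed_cube x0 a \<subseteq> \<Omega>" "\<forall>x\<in>closed_cube x0 a. \<beta> \<le> b x"
    and "0 < \<epsilon>" "\<epsilon> \<le> \<beta> / 2"
  shows "lam \<le> 2 * (real CARD('n) * (pi / (2 * a))\<^sup>2) / \<beta> * \<epsilon> powr (2 - q)"
proof -
  have \<kappa>: "0 < \<beta> / 2 * \<epsilon> powr (q - 2)" using assms(5,6) by simp
  have "\<forall>x\<in>closed_cube x0 a. \<beta> / 2 * \<epsilon> powr (q - 2) \<le> (b x - \<epsilon>) * \<epsilon> powr (q - 2)"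
    using assms(4-6) by (auto intro!: mult_right_mono)
  from principal_neumann_eigenvalue_le_cube[OF assms(1-3) \<kappa> this]
  show ?thesis using assms(5) by (simp add: powr_diff field_simps)
qed

theorem lemma6p6:
  fixes \<Omega> :: "(real^'n) set" and b :: "real^'n \<Rightarrow> real" and q \<alpha> :: real
  assumes "CARD('n) \<ge> 2"
    and "bounded_smooth_domain \<Omega>"
    and "1 < q" and "q < 2"
    and "0 < \<alpha>" and "\<alpha> < 1"
    and "continuous_on (closure \<Omega>) b" and "holder_on \<alpha> (closure \<Omega>) b"
    and "\<exists>x\<in>\<Omega>. b x > 0"
    and "integral \<Omega> b \<le> 0"
  shows "\<forall>e>0. \<forall>\<^sub>F \<epsilon> in at_right 0.
           \<forall>lam>0. principal_neumann_eigenvalue \<Omega> (\<lambda>x. (b x - \<epsilon>) * \<epsilon> powr (q - 2)) lam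
                  \<longrightarrow> lam < e"
proof (intro allI impI)
  fix e :: real assume "e > 0"
  have "open \<Omega>" using assms(2) by (simp add: bounded_smooth_domain_def)
  moreover have "continuous_on \<Omega> b"
    using assms(7) closure_subset continuous_on_subset by blast
  ultimately obtain x0 a \<beta> where cube: "a > 0" "\<beta> > 0" "closed_cube x0 a \<subseteq> \<Omega>"
    "\<forall>x\<in>closed_cube x0 a. \<beta> \<le> b x"
    using assms(9) exists_cube_bounded_below by metis
  define C where "C = 2 * (real CARD('n) * (pi / (2 * a))\<^sup>2) / \<beta>"
  have "((\<lambda>\<epsilon>. C * \<epsilon> powr (2 - q)) \<longlongrightarrow> C * 0) (at_right 0)"
    using assms(4) by (intro tendsto_mult tendsto_const tendsto_zero_powrI[where b = "2 - q"])
      (auto intro!: tendsto_ident_at eventually_at_rightI[where b = 1])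
  then have "\<forall>\<^sub>F \<epsilon> in at_right 0. C * \<epsilon> powr (2 - q) < e"
    using \<open>e > 0\<close> by (simp add: order_tendstoD(2))
  moreover have "\<forall>\<^sub>F \<epsilon> in at_right 0. 0 < \<epsilon> \<and> \<epsilon> < \<beta> / 2"
    using \<open>\<beta> > 0\<close> by (intro eventually_at_rightI[where b = "\<beta> / 2"]) auto
  ultimately show "\<forall>\<^sub>F \<epsilon> in at_right 0. \<forall>lam>0.
      principal_neumann_eigenvalue \<Omega> (\<lambda>x. (b x - \<epsilon>) * \<epsilon> powr (q - 2)) lam \<longrightarrow> lam < e"
    by eventually_elim
      (use cube principal_neumann_eigenvalue_le_scaled_weight in \<open>fastforce simp: C_def\<close>)
qed

end
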